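(* Let $Y$ be a finite connected simple undirected graph with a cycle-edge $e=\{v,w\}$, and let $O\in\mathsf{Acyc}(Y)$ with $v\leq_O w$. Let $\mathbf{c}=c_1c_2\cdots c_m$ be a click-sequence for $O$ containing precisely one occurrence of $w$ and such that no vertex of $\mathcal{I}(O)$ occurs in $\mathbf{c}$ after that occurrence of $w$. Then there exists a click-sequence $\mathbf{c}'=c'_1c'_2\cdots c'_m$ for $O$ such that (i) there is an interval $[p,q]$ of integers with $c'_j\in\mathcal{I}(O)$ if and only if $p\leq j\leq q$, and (ii) $\mathbf{c}(O)=\mathbf{c}'(O)$.
   Context: $\mathsf{Acyc}(Y)$ is the set of acyclic orientations; $i\leq_O j$ iff there is a directed path from $i$ to $j$ in $O$. $\mathcal{I}(O)=\{a: v\leq_O a\leq_O w\}$ when $v\leq_O w$. A click at a vertex $x$ which is a source reverses all edges incident to $x$. A click-sequence for $O$ is a sequence of vertices $c_1,\dots,c_m$ such that for each $i$, $c_i$ is a source of the orientation obtained from $O$ by successively clicking $c_1,\dots,c_{i-1}$; $\mathbf{c}(O)$ denotes the resulting orientation after all $m$ clicks. *)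

theory Defs
  imports Main
begin

definition simple_graph :: "'a set \<Rightarrow> 'a set set \<Rightarrow> bool" where
  "simple_graph V E \<longleftrightarrow> finite V \<and> (\<forall>e\<in>E. \<exists>a b. e = {a, b} \<and> a \<in> V \<and> b \<in> V \<and> a \<noteq> b)"

definition adj_rel :: "'a set set \<Rightarrow> ('a \<times> 'a) set" where
  "adj_rel E = {(a, b). {a, b} \<in> E}"

definition connected_graph :: "'a set \<Rightarrow> 'a set set \<Rightarrow> bool" where
  "connected_graph V E \<longleftrightarrow> (\<forall>a\<in>V. \<forall>b\<in>V. (a, b) \<in> (adj_rel E)\<^sup>*)"

(* e = {v,w} is a cycle-edge: it lies on a cycle, i.e. v and w are joined by a path avoiding e *)
definition cycle_edge :: "'a set set \<Rightarrow> 'a \<Rightarrow> 'a \<Rightarrow> bool" where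
  "cycle_edge E v w \<longleftrightarrow> {v, w} \<in> E \<and> v \<noteq> w \<and> (v, w) \<in> (adj_rel (E - {{v, w}}))\<^sup>*"

definition orientation :: "'a set set \<Rightarrow> ('a \<times> 'a) set \<Rightarrow> bool" where
  "orientation E Ori \<longleftrightarrow> (\<forall>(a, b)\<in>Ori. {a, b} \<in> E) \<and>
     (\<forall>a b. {a, b} \<in> E \<longrightarrow> ((a, b) \<in> Ori \<longleftrightarrow> (b, a) \<notin> Ori))"

definition Acyc :: "'a set set \<Rightarrow> ('a \<times> 'a) set set" where
  "Acyc E = {Ori. orientation E Ori \<and> acyclic Ori}"

definition ord_le :: "('a \<times> 'a) set \<Rightarrow> 'a \<Rightarrow> 'a \<Rightarrow> bool" where
  "ord_le Ori i j \<longleftrightarrow> (i, j) \<in> Ori\<^sup>*"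

definition interval :: "('a \<times> 'a) set \<Rightarrow> 'a \<Rightarrow> 'a \<Rightarrow> 'a set" where
  "interval Ori v w = {a. ord_le Ori v a \<and> ord_le Ori a w}"

definition is_source :: "'a set \<Rightarrow> ('a \<times> 'a) set \<Rightarrow> 'a \<Rightarrow> bool" where
  "is_source V Ori x \<longleftrightarrow> x \<in> V \<and> (\<forall>y. (y, x) \<notin> Ori)"

definition click :: "'a \<Rightarrow> ('a \<times> 'a) set \<Rightarrow> ('a \<times> 'a) set" where
  "click x Ori = {(a, b). (a, b) \<in> Ori \<and> a \<noteq> x \<and> b \<noteq> x} \<union> {(b, a). (a, b) \<in> Ori \<and> (a = x \<or> b = x)}"

fun click_seq :: "'a set \<Rightarrow> ('a \<times> 'a) set \<Rightarrow> 'a list \<Rightarrow> bool" where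
  "click_seq V Ori [] = True"
| "click_seq V Ori (c # cs) = (is_source V Ori c \<and> click_seq V (click c Ori) cs)"

definition apply_clicks :: "'a list \<Rightarrow> ('a \<times> 'a) set \<Rightarrow> ('a \<times> 'a) set" where
  "apply_clicks cs Ori = fold click cs Ori"

end

theory Submission
  imports Defs
begin

text \<open>
  A sequence of clicks reverses an edge iff its endpoints were clicked an odd number of times in
  total; hence permuting the clicks so that, for every edge and every vertex, the clicks at its
  endpoints keep their relative order yields a click-sequence with the same result.
  Since only sources are clicked, the clicks at the endpoints of an edge \<open>a \<rightarrow> b\<close> alternate,
  starting with \<open>a\<close>. So before the unique click of \<open>w\<close> the vertex \<open>v\<close> has been clicked at most
  once, and so has every vertex of \<open>I(O)\<close>, being reachable from \<open>v\<close>: all clicks in \<open>I(O)\<close> are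
  first clicks of their vertex. Dependent clicks of the same round follow directed paths of \<open>O\<close>,
  so every chain of dependencies between two clicks in \<open>I(O)\<close> stays inside \<open>I(O)\<close>. A stable sort
  putting first the clicks on which some click in \<open>I(O)\<close> depends, then those in \<open>I(O)\<close>, then the
  rest, makes the clicks in \<open>I(O)\<close> contiguous.
\<close>

lemma mem_click:
  "(a, b) \<in> click x Q \<longleftrightarrow> (if x = a \<or> x = b then (b, a) \<in> Q else (a, b) \<in> Q)"
  unfolding click_def by auto

lemma mem_fold_click:
  "(a, b) \<in> fold click xs Q \<longleftrightarrow>
     (if even (length (filter (\<lambda>x. x = a \<or> x = b) xs)) then (a, b) \<in> Q else (b, a) \<in> Q)"
  by (induction xs arbitrary: Q) (auto simp: mem_click)

lemma click_seq_iff_nth: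
  "click_seq V Q cs \<longleftrightarrow> (\<forall>t < length cs. is_source V (fold click (take t cs) Q) (cs ! t))"
proof (induction cs arbitrary: Q)
  case (Cons c cs)
  have "(\<forall>t < length (c # cs). is_source V (fold click (take t (c # cs)) Q) ((c # cs) ! t)) \<longleftrightarrow>
        is_source V Q c \<and> (\<forall>t < length cs. is_source V (fold click (take t cs) (click c Q)) (cs ! t))"
    by (auto simp: less_Suc_eq_0_disj)
  then show ?case using Cons by simp
qed simp

lemma click_seq_nth_source:
  assumes "click_seq V Q cs" "t < length cs"
  shows "cs ! t \<in> V"
    and "\<not> (if even (length (filter (\<lambda>x. x = y \<or> x = cs ! t) (take t cs)))
            then (y, cs ! t) \<in> Q else (cs ! t, y) \<in> Q)"
  using assms unfolding click_seq_iff_nth is_source_def by (metis mem_fold_click)+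

lemma filter_take_nth_eq_takeWhile:
  assumes "distinct xs" "i < length xs" "P (xs ! i)"
  shows "filter P (take i xs) = takeWhile (\<lambda>x. x \<noteq> xs ! i) (filter P xs)"
proof -
  have "xs ! i \<notin> set (take i xs)"
    using assms(1,2) by (auto simp: in_set_conv_nth nth_eq_iff_index_eq)
  moreover have "filter P xs = filter P (take i xs) @ xs ! i # filter P (drop (Suc i) xs)"
    using assms(2,3) by (subst id_take_nth_drop[OF assms(2)]) simp
  ultimately show ?thesis by (simp add: takeWhile_append)
qed

lemma length_filter_map_nth:
  "length (filter P (map (nth xs) ns)) = length (filter (\<lambda>t. P (xs ! t)) ns)"
  by (simp add: filter_map comp_def)

definition click_dep :: "('a \<times> 'a) set \<Rightarrow> 'a list \<Rightarrow> nat rel" where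
  "click_dep Q cs = {(s, t). s < t \<and> t < length cs \<and>
     (cs ! s = cs ! t \<or> (cs ! s, cs ! t) \<in> Q \<or> (cs ! t, cs ! s) \<in> Q)}"

lemma click_seq_permute:
  assumes cs: "click_seq V Q cs"
    and L: "distinct L" "set L = {..<length cs}"
    and order: "\<And>a b. a = b \<or> (a, b) \<in> Q \<or> (b, a) \<in> Q \<Longrightarrow>
       filter (\<lambda>t. cs ! t = a \<or> cs ! t = b) L = filter (\<lambda>t. cs ! t = a \<or> cs ! t = b) [0..<length cs]"
  shows "click_seq V Q (map (nth cs) L)" and "fold click (map (nth cs) L) Q = fold click cs Q"
proof -
  have count_eq: "length (filter (\<lambda>x. x = a \<or> x = b) (map (nth cs) L)) =
      length (filter (\<lambda>x. x = a \<or> x = b) cs)" if "a = b \<or> (a, b) \<in> Q \<or> (b, a) \<in> Q" for a b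
    using order[OF that] length_filter_map_nth[of "\<lambda>x. x = a \<or> x = b" cs] by (metis map_nth)
  show "fold click (map (nth cs) L) Q = fold click cs Q"
  proof (rule set_eqI, clarify)
    fix a b
    show "(a, b) \<in> fold click (map (nth cs) L) Q \<longleftrightarrow> (a, b) \<in> fold click cs Q"
      using count_eq[of a b] by (cases "a = b \<or> (a, b) \<in> Q \<or> (b, a) \<in> Q") (auto simp: mem_fold_click)
  qed
  show "click_seq V Q (map (nth cs) L)"
    unfolding click_seq_iff_nth is_source_def
  proof (intro allI impI conjI)
    fix t' y
    assume t': "t' < length (map (nth cs) L)"
    define t where "t = L ! t'"
    have t: "t < length cs" using t' L(2) nth_mem unfolding t_def by fastforce
    have nth_t: "map (nth cs) L ! t' = cs ! t" using t' t_def by simp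
    show "map (nth cs) L ! t' \<in> V" using click_seq_nth_source(1)[OF cs t] nth_t by simp
    let ?c = "cs ! t"
    show "(y, map (nth cs) L ! t') \<notin> fold click (take t' (map (nth cs) L)) Q"
    proof (cases "y = ?c \<or> (y, ?c) \<in> Q \<or> (?c, y) \<in> Q")
      case False
      then show ?thesis by (auto simp: mem_fold_click nth_t)
    next
      case True
      let ?P = "\<lambda>t. cs ! t = y \<or> cs ! t = ?c"
      have "length (filter (\<lambda>x. x = y \<or> x = ?c) (take t' (map (nth cs) L))) =
            length (takeWhile (\<lambda>x. x \<noteq> t) (filter ?P L))"
        using filter_take_nth_eq_takeWhile[OF L(1), of t' ?P] t' t_def
        by (simp add: take_map filter_map comp_def)
      also have "\<dots> = length (takeWhile (\<lambda>x. x \<noteq> t) (filter ?P [0..<length cs]))"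
        using order[OF True] by simp
      also have "\<dots> = length (filter (\<lambda>x. x = y \<or> x = ?c) (take t cs))"
      proof -
        have "take t cs = map (nth cs) (take t [0..<length cs])"
          by (metis map_nth take_map)
        then show ?thesis
          using filter_take_nth_eq_takeWhile[of "[0..<length cs]" t ?P] t
          by (simp add: filter_map comp_def)
      qed
      finally show ?thesis
        using click_seq_nth_source(2)[OF cs t, of y] by (simp add: mem_fold_click nth_t)
    qed
  qed
qed

lemma click_dep_trancl_less: "(s, t) \<in> (click_dep Q cs)\<^sup>+ \<Longrightarrow> s < t \<and> t < length cs"
  by (induction rule: trancl_induct) (auto simp: click_dep_def)

lemma click_seq_sort_key:
  fixes key :: "nat \<Rightarrow> 'b::linorder"
  assumes cs: "click_seq V Q cs"
    and mono: "\<And>s t. (s, t) \<in> click_dep Q cs \<Longrightarrow> key s \<le> key t"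
  shows "click_seq V Q (map (nth cs) (sort_key key [0..<length cs]))"
    and "fold click (map (nth cs) (sort_key key [0..<length cs])) Q = fold click cs Q"
proof -
  have "filter P (sort_key key [0..<length cs]) = filter P [0..<length cs]"
    if ab: "a = b \<or> (a, b) \<in> Q \<or> (b, a) \<in> Q" and P: "P = (\<lambda>t. cs ! t = a \<or> cs ! t = b)" for a b P
  proof -
    have "sorted_wrt (<) (filter P [0..<length cs])"
      by (rule sorted_wrt_filter) simp
    then have "sorted_wrt (\<lambda>s t. key s \<le> key t) (filter P [0..<length cs])"
    proof (rule sorted_wrt_mono_rel[rotated])
      fix s t assume "s \<in> set (filter P [0..<length cs])" "t \<in> set (filter P [0..<length cs])" "s < t"
      then have "(s, t) \<in> click_dep Q cs" using ab unfolding P click_dep_def by auto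
      then show "key s \<le> key t" by (rule mono)
    qed
    then show ?thesis by (simp add: filter_sort sort_key_id_if_sorted sorted_map)
  qed
  then show "click_seq V Q (map (nth cs) (sort_key key [0..<length cs]))"
    and "fold click (map (nth cs) (sort_key key [0..<length cs])) Q = fold click cs Q"
    using click_seq_permute[OF cs, of "sort_key key [0..<length cs]"] by (auto simp: atLeast0LessThan)
qed

lemma sorted_nth_takeWhile_iff:
  assumes "sorted xs" "j < length xs" and down: "\<And>x y. x \<le> y \<Longrightarrow> P y \<Longrightarrow> P x"
  shows "P (xs ! j) \<longleftrightarrow> j < length (takeWhile P xs)"
proof
  assume "j < length (takeWhile P xs)"
  then show "P (xs ! j)" by (metis nth_mem set_takeWhileD takeWhile_nth)
next
  assume Pj: "P (xs ! j)"
  show "j < length (takeWhile P xs)"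
  proof (rule ccontr)
    let ?m = "length (takeWhile P xs)"
    assume "\<not> j < ?m"
    then have "?m < length xs" "xs ! ?m \<le> xs ! j"
      using assms(1,2) sorted_nth_mono by fastforce+
    then show False using nth_length_takeWhile down Pj by blast
  qed
qed

lemma atLeastLessThan_eq_atLeastAtMost_nat: "\<exists>p q. {a..<b} = {p..q::nat}"
proof (cases "a < b")
  case True
  then have "{a..<b} = {a..b - 1}" by auto
  then show ?thesis by blast
next
  case False
  then have "{a..<b} = {1..0::nat}" by auto
  then show ?thesis by blast
qed

lemma sorted_nth_eq_contiguous:
  fixes xs :: "'a::linorder list"
  assumes "sorted xs"
  shows "\<exists>p q. \<forall>j < length xs. xs ! j = k \<longleftrightarrow> p \<le> j \<and> j \<le> q"
proof -
  define a where "a = length (takeWhile (\<lambda>x. x < k) xs)"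
  define b where "b = length (takeWhile (\<lambda>x. x \<le> k) xs)"
  have "xs ! j = k \<longleftrightarrow> j \<in> {a..<b}" if "j < length xs" for j
    using sorted_nth_takeWhile_iff[OF assms that, of "\<lambda>x. x < k"]
      sorted_nth_takeWhile_iff[OF assms that, of "\<lambda>x. x \<le> k"]
    unfolding a_def b_def by fastforce
  moreover obtain p q where "{a..<b} = {p..q}"
    using atLeastLessThan_eq_atLeastAtMost_nat by blast
  ultimately show ?thesis by auto
qed

lemma click_seq_contiguous:
  assumes cs: "click_seq V Q cs"
    and convex: "\<And>s t u. (s, t) \<in> (click_dep Q cs)\<^sup>+ \<Longrightarrow> (t, u) \<in> (click_dep Q cs)\<^sup>+ \<Longrightarrow>
       cs ! s \<in> A \<Longrightarrow> cs ! u \<in> A \<Longrightarrow> cs ! t \<in> A"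
  shows "\<exists>cs'. length cs' = length cs \<and> click_seq V Q cs' \<and> fold click cs' Q = fold click cs Q \<and>
           (\<exists>p q. \<forall>j < length cs'. cs' ! j \<in> A \<longleftrightarrow> p \<le> j \<and> j \<le> q)"
proof -
  let ?D = "click_dep Q cs"
  define key :: "nat \<Rightarrow> nat" where
    "key t = (if cs ! t \<in> A then 1 else if \<exists>u. (t, u) \<in> ?D\<^sup>+ \<and> cs ! u \<in> A then 0 else 2)" for t
  have key_mono: "key s \<le> key t" if "(s, t) \<in> ?D" for s t
    using that convex[of s t] by (auto simp: key_def intro: trancl_into_trancl2)
  define L where "L = sort_key key [0..<length cs]"
  have "length (map (nth cs) L) = length cs" by (simp add: L_def)
  moreover have "click_seq V Q (map (nth cs) L)" "fold click (map (nth cs) L) Q = fold click cs Q"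
    using click_seq_sort_key[OF cs, of key] key_mono unfolding L_def by blast+
  moreover have "map (nth cs) L ! j \<in> A \<longleftrightarrow> map key L ! j = 1" if "j < length L" for j
    using that by (simp add: key_def)
  moreover obtain p q where "\<forall>j < length cs. map key L ! j = 1 \<longleftrightarrow> p \<le> j \<and> j \<le> q"
    using sorted_nth_eq_contiguous[OF sorted_sort_key, of key "[0..<length cs]" 1]
    unfolding L_def by auto
  ultimately show ?thesis
    by (intro exI[of _ "map (nth cs) L"]) auto
qed

lemma count_list_take_Suc:
  "s < length xs \<Longrightarrow> count_list (take (Suc s) xs) x = count_list (take s xs) x + (if xs ! s = x then 1 else 0)"
  by (simp add: take_Suc_conv_app_nth)

lemma count_list_take_mono: "m \<le> n \<Longrightarrow> count_list (take m xs) x \<le> count_list (take n xs) x"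
  by (metis count_list_append le_add1 le_add_diff_inverse take_add)

lemma length_filter_eq_count_list_add:
  "a \<noteq> b \<Longrightarrow> length (filter (\<lambda>x. x = a \<or> x = b) xs) = count_list xs a + count_list xs b"
  by (induction xs) auto

lemma count_list_take_nth_Suc_le:
  "s < t \<Longrightarrow> t < length xs \<Longrightarrow>
     count_list (take s xs) (xs ! s) + 1 \<le> count_list (take t xs) (xs ! s)"
  using count_list_take_mono[of "Suc s" t xs "xs ! s"] count_list_take_Suc[of s xs "xs ! s"] by simp

definition click_round :: "'a list \<Rightarrow> nat \<Rightarrow> nat" where
  "click_round cs t = count_list (take t cs) (cs ! t)"

locale click_sequence =
  fixes V :: "'a set" and Q :: "('a \<times> 'a) set" and cs :: "'a list"
  assumes click_seq: "click_seq V Q cs" and irrefl: "irrefl Q"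
begin

lemma edge_neq: "(a, b) \<in> Q \<Longrightarrow> a \<noteq> b"
  using irrefl by (auto simp: irrefl_def)

lemma count_parity_at_tail:
  assumes "(a, b) \<in> Q" "t < length cs" "cs ! t = a"
  shows "even (count_list (take t cs) a + count_list (take t cs) b)"
proof -
  show ?thesis
    using click_seq_nth_source(2)[OF click_seq assms(2), of b] assms edge_neq[OF assms(1)]
    by (auto simp: length_filter_eq_count_list_add add.commute split: if_splits)
qed

lemma count_parity_at_head:
  assumes "(a, b) \<in> Q" "t < length cs" "cs ! t = b"
  shows "odd (count_list (take t cs) a + count_list (take t cs) b)"
proof -
  show ?thesis
    using click_seq_nth_source(2)[OF click_seq assms(2), of a] assms edge_neq[OF assms(1)]
    by (auto simp: length_filter_eq_count_list_add split: if_splits)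
qed

lemma edge_count_balance:
  assumes "(a, b) \<in> Q" "t \<le> length cs"
  shows "count_list (take t cs) b \<le> count_list (take t cs) a \<and>
         count_list (take t cs) a \<le> count_list (take t cs) b + 1"
  using assms(2)
proof (induction t)
  case (Suc t)
  then have t: "t < length cs" by simp
  show ?case
    using Suc count_parity_at_tail[OF assms(1) t] count_parity_at_head[OF assms(1) t] edge_neq[OF assms(1)]
    by (auto simp: count_list_take_Suc[OF t]) presburger+
qed simp

lemma count_eq_at_tail:
  assumes "(a, b) \<in> Q" "t < length cs" "cs ! t = a"
  shows "count_list (take t cs) a = count_list (take t cs) b"
  using count_parity_at_tail[OF assms] edge_count_balance[OF assms(1), of t] assms(2) by presburger

lemma count_eq_at_head:
  assumes "(a, b) \<in> Q" "t < length cs" "cs ! t = b"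
  shows "count_list (take t cs) a = count_list (take t cs) b + 1"
  using count_parity_at_head[OF assms] edge_count_balance[OF assms(1), of t] assms(2) by presburger

lemma path_count_antimono:
  assumes "(x, y) \<in> Q\<^sup>*" "t \<le> length cs"
  shows "count_list (take t cs) y \<le> count_list (take t cs) x"
  using assms(1)
proof (induction rule: rtrancl_induct)
  case (step y z)
  then show ?case using edge_count_balance[OF step(2) assms(2)] by simp
qed simp

lemma click_round_less_same:
  "s < t \<Longrightarrow> t < length cs \<Longrightarrow> cs ! s = cs ! t \<Longrightarrow> click_round cs s < click_round cs t"
  using count_list_take_nth_Suc_le[of s t cs] by (simp add: click_round_def)

lemma click_round_le_edge:
  "s < t \<Longrightarrow> t < length cs \<Longrightarrow> (cs ! s, cs ! t) \<in> Q \<Longrightarrow> click_round cs s \<le> click_round cs t"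
  using count_eq_at_tail[of "cs ! s" "cs ! t" s] count_eq_at_head[of "cs ! s" "cs ! t" t]
    count_list_take_nth_Suc_le[of s t cs] by (simp add: click_round_def)

lemma click_round_less_back_edge:
  "s < t \<Longrightarrow> t < length cs \<Longrightarrow> (cs ! t, cs ! s) \<in> Q \<Longrightarrow> click_round cs s < click_round cs t"
  using count_eq_at_head[of "cs ! t" "cs ! s" s] count_eq_at_tail[of "cs ! t" "cs ! s" t]
    count_list_take_nth_Suc_le[of s t cs] by (simp add: click_round_def)

lemma click_dep_round_mono: "(s, t) \<in> click_dep Q cs \<Longrightarrow> click_round cs s \<le> click_round cs t"
  unfolding click_dep_def
  using click_round_less_same click_round_le_edge click_round_less_back_edge by fastforce

lemma click_dep_same_round_edge:
  "(s, t) \<in> click_dep Q cs \<Longrightarrow> click_round cs t \<le> click_round cs s \<Longrightarrow> (cs ! s, cs ! t) \<in> Q"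
  unfolding click_dep_def
  using click_round_less_same click_round_less_back_edge by fastforce

lemma click_dep_trancl_round_mono:
  "(s, t) \<in> (click_dep Q cs)\<^sup>+ \<Longrightarrow> click_round cs s \<le> click_round cs t"
  by (induction rule: trancl_induct) (auto dest: click_dep_round_mono)

lemma click_dep_trancl_same_round_path:
  "(s, t) \<in> (click_dep Q cs)\<^sup>+ \<Longrightarrow> click_round cs t \<le> click_round cs s \<Longrightarrow> (cs ! s, cs ! t) \<in> Q\<^sup>+"
proof (induction rule: trancl_induct)
  case (base t)
  then show ?case by (auto dest: click_dep_same_round_edge)
next
  case (step t u)
  have "click_round cs s \<le> click_round cs t" "click_round cs t \<le> click_round cs u"
    using click_dep_trancl_round_mono[OF step(1)] click_dep_round_mono[OF step(2)] .
  then show ?case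
    using step click_dep_same_round_edge[OF step(2)] by (auto intro: trancl_into_trancl)
qed

lemma interval_clicks_first_round:
  assumes "(v, w) \<in> Q" "cs = pre @ w # post" "w \<notin> set pre" "set post \<inter> interval Q v w = {}"
    and "t < length cs" "cs ! t \<in> interval Q v w"
  shows "click_round cs t = 0"
proof -
  let ?k = "length pre"
  have k: "?k < length cs" "cs ! ?k = w" "take ?k cs = pre" using assms(2) by auto
  have "t \<le> ?k"
  proof (rule ccontr)
    assume "\<not> t \<le> ?k"
    then have "cs ! t \<in> set post" using assms(2,5) by (auto simp: nth_append nth_Cons')
    then show False using assms(4,6) by blast
  qed
  then consider "t = ?k" | "t < ?k" by linarith
  then show ?thesis
  proof cases
    case 1
    then show ?thesis using k assms(3) by (simp add: click_round_def)
  next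
    case 2
    have "count_list pre v \<le> 1"
      using edge_count_balance[OF assms(1), of ?k] k assms(3) by simp
    moreover have "(v, cs ! t) \<in> Q\<^sup>*" using assms(6) by (simp add: interval_def ord_le_def)
    ultimately have "count_list pre (cs ! t) \<le> 1"
      using path_count_antimono[of v "cs ! t" ?k] k by simp
    then show ?thesis using count_list_take_nth_Suc_le[OF 2 k(1)] k by (simp add: click_round_def)
  qed
qed

lemma interval_click_dep_convex:
  assumes first_round: "\<And>t. t < length cs \<Longrightarrow> cs ! t \<in> interval Q v w \<Longrightarrow> click_round cs t = 0"
    and st: "(s, t) \<in> (click_dep Q cs)\<^sup>+" and tu: "(t, u) \<in> (click_dep Q cs)\<^sup>+"
    and "cs ! s \<in> interval Q v w" "cs ! u \<in> interval Q v w"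
  shows "cs ! t \<in> interval Q v w"
proof -
  have "s < t" "t < u" "u < length cs"
    using click_dep_trancl_less[OF st] click_dep_trancl_less[OF tu] by auto
  then have "click_round cs s = 0" "click_round cs u = 0"
    using first_round assms(4,5) by auto
  moreover have "click_round cs s \<le> click_round cs t" "click_round cs t \<le> click_round cs u"
    using click_dep_trancl_round_mono st tu by blast+
  ultimately have "(cs ! s, cs ! t) \<in> Q\<^sup>+" "(cs ! t, cs ! u) \<in> Q\<^sup>+"
    using click_dep_trancl_same_round_path st tu by auto
  with assms(4,5) show ?thesis
    unfolding interval_def ord_le_def by (auto dest: trancl_into_rtrancl)
qed

end

lemma Acyc_ord_le_imp_edge:
  assumes "Ori \<in> Acyc E" "{v, w} \<in> E" "ord_le Ori v w"
  shows "(v, w) \<in> Ori"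
proof -
  have "(w, v) \<notin> Ori"
  proof
    assume "(w, v) \<in> Ori"
    with assms(3) have "(w, w) \<in> Ori\<^sup>+" by (simp add: ord_le_def rtrancl_into_trancl2)
    with assms(1) show False by (simp add: Acyc_def acyclic_def)
  qed
  then show ?thesis using assms(1,2) by (auto simp: Acyc_def orientation_def)
qed

theorem proposition8:
  fixes V :: "'a set" and E :: "'a set set" and v w :: 'a
    and Ori :: "('a \<times> 'a) set" and cs :: "'a list"
  assumes "simple_graph V E" and "connected_graph V E"
    and "cycle_edge E v w"
    and "Ori \<in> Acyc E" and "ord_le Ori v w"
    and "click_seq V Ori cs"
    and "length (filter (\<lambda>x. x = w) cs) = 1"
    and "\<forall>i j. i < j \<and> j < length cs \<and> cs ! i = w \<longrightarrow> cs ! j \<notin> interval Ori v w"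
  shows "\<exists>cs'. length cs' = length cs \<and> click_seq V Ori cs' \<and>
     (\<exists>p q. \<forall>j < length cs'. (cs' ! j \<in> interval Ori v w \<longleftrightarrow> p \<le> j \<and> j \<le> q)) \<and>
     apply_clicks cs Ori = apply_clicks cs' Ori"
proof -
  interpret click_sequence V Ori cs
    using assms(4,6) by unfold_locales (auto simp: Acyc_def acyclic_def irrefl_def)
  have vw: "(v, w) \<in> Ori"
    using Acyc_ord_le_imp_edge[OF assms(4) _ assms(5)] assms(3) by (simp add: cycle_edge_def)
  have "count_list cs w = length (filter (\<lambda>x. x = w) cs)"
    by (induction cs) auto
  then have "count_list cs w = Suc 0" using assms(7) by simp
  then obtain pre post where split: "cs = pre @ w # post" "w \<notin> set pre"
    by (metis count_list_Suc_split_first)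
  have "post ! j \<notin> interval Ori v w" if "j < length post" for j
    using assms(8)[rule_format, of "length pre" "length pre + Suc j"] that split(1)
    by (simp add: nth_append)
  then have "set post \<inter> interval Ori v w = {}" by (auto simp: in_set_conv_nth)
  then have "click_round cs t = 0" if "t < length cs" "cs ! t \<in> interval Ori v w" for t
    using interval_clicks_first_round[OF vw split] that by blast
  then have convex: "cs ! t \<in> interval Ori v w"
    if "(s, t) \<in> (click_dep Ori cs)\<^sup>+" "(t, u) \<in> (click_dep Ori cs)\<^sup>+"
      "cs ! s \<in> interval Ori v w" "cs ! u \<in> interval Ori v w" for s t u
    using interval_click_dep_convex that by blast
  obtain cs' where "length cs' = length cs" "click_seq V Ori cs'" "fold click cs' Ori = fold click cs Ori"
      "\<exists>p q. \<forall>j < length cs'. cs' ! j \<in> interval Ori v w \<longleftrightarrow> p \<le> j \<and> j \<le> q"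
    using click_seq_contiguous[OF assms(6), of "interval Ori v w"] convex by blast
  then show ?thesis unfolding apply_clicks_def by metis
qed

end
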